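(* Let $X$ be a $d\times d$ positive semidefinite matrix with eigenvalue vector $\lambda\in\mathbb{R}^d_+$ and let $1\le j\le d$. Then $e_j(\lambda)\ge\exp(\Gamma_j(X))$. More precisely, if $\lambda_1\ge\dots\ge\lambda_d$ and $k$ is the unique integer with $0\le k\le j-1$ and $\lambda_k>\frac{1}{j-k}\sum_{i>k}\lambda_i\ge\lambda_{k+1}$ (with $\lambda_0=\infty$), then $\lambda$ is majorized by the vector $\mu$ with $\mu_i=\lambda_i$ for $i\le k$, $\mu_i=\frac{1}{j-k}\sum_{t>k}\lambda_t$ for $k<i\le j$, and $\mu_i=0$ for $i>j$, and $e_j(\lambda)\ge e_j(\mu)=\exp(\Gamma_j(X))$.
   Context: $e_j(x_1,\dots,x_d)\coloneqq\sum_{S\subseteq[d],|S|=j}\prod_{i\in S}x_i$ is the elementary symmetric polynomial of degree $j$. For $x,y\in\mathbb{R}^d_+$, $x$ is majorized by $y$ if $\sum_{i=1}^\ell x_{(i)}\le\sum_{i=1}^\ell y_{(i)}$ for all $1\le\ell\le d-1$ and $\sum_{i=1}^d x_{(i)}=\sum_{i=1}^d y_{(i)}$, where $x_{(i)}$ is the $i$-th largest coordinate. For $x\in\mathbb{R}^d_+$, with $k$ the unique integer in $\{0,\dots,j-1\}$ such that $x_{(k)}>\frac{1}{j-k}\sum_{i>k}x_{(i)}\ge x_{(k+1)}$ ($x_{(0)}=\infty$), $\gamma_j(x)\coloneqq\sum_{i=1}^k\ln x_{(i)}+(j-k)\ln\big(\frac{1}{j-k}\sum_{i=k+1}^d x_{(i)}\big)$,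 with $\ln 0=-\infty$ and $\exp(-\infty)=0$; $\Gamma_j(X)\coloneqq\gamma_j(\lambda)$. *)

theory Defs
  imports "Jordan_Normal_Form.Char_Poly" "HOL-Library.Extended_Real"
begin

definition esym :: "nat \<Rightarrow> real list \<Rightarrow> real" where
  "esym j xs = (\<Sum>S\<in>{S. S \<subseteq> {0..<length xs} \<and> card S = j}. \<Prod>i\<in>S. xs ! i)"

text \<open>Decreasing rearrangement; ordc xs i is x_(i), the i-th largest coordinate (1-indexed).\<close>
definition dsort :: "real list \<Rightarrow> real list" where
  "dsort xs = rev (sort xs)"

definition ordc :: "real list \<Rightarrow> nat \<Rightarrow> real" where
  "ordc xs i = dsort xs ! (i - 1)"

definition majorized :: "real list \<Rightarrow> real list \<Rightarrow> bool" where
  "majorized x y \<longleftrightarrow> length x = length y \<and>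
     (\<forall>l. 1 \<le> l \<and> l \<le> length x - 1 \<longrightarrow>
        (\<Sum>i=1..l. ordc x i) \<le> (\<Sum>i=1..l. ordc y i)) \<and>
     (\<Sum>i=1..length x. ordc x i) = (\<Sum>i=1..length y. ordc y i)"

definition tailavg :: "nat \<Rightarrow> nat \<Rightarrow> real list \<Rightarrow> real" where
  "tailavg j k xs = (\<Sum>i=k+1..length xs. ordc xs i) / real (j - k)"

text \<open>The defining condition of k (with x_(0) = infinity).\<close>
definition kcond :: "nat \<Rightarrow> real list \<Rightarrow> nat \<Rightarrow> bool" where
  "kcond j xs k \<longleftrightarrow> (k = 0 \<or> ordc xs k > tailavg j k xs) \<and> tailavg j k xs \<ge> ordc xs (k + 1)"

definition kidx :: "nat \<Rightarrow> real list \<Rightarrow> nat" where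
  "kidx j xs = (THE k. k < j \<and> kcond j xs k)"

definition lnE :: "real \<Rightarrow> ereal" where
  "lnE x = (if x = 0 then MInfty else ereal (ln x))"

fun expE :: "ereal \<Rightarrow> real" where
  "expE (ereal x) = exp x"
| "expE MInfty = 0"
| "expE PInfty = undefined"

definition gammaj :: "nat \<Rightarrow> real list \<Rightarrow> ereal" where
  "gammaj j xs = (let k = kidx j xs in
     (\<Sum>i=1..k. lnE (ordc xs i)) + ereal (real (j - k)) * lnE (tailavg j k xs))"

definition muvec :: "nat \<Rightarrow> nat \<Rightarrow> real list \<Rightarrow> real list" where
  "muvec j k xs = map (\<lambda>i. if i \<le> k then ordc xs i else if i \<le> j then tailavg j k xs else 0)
                      [1..<length xs + 1]"

definition psd :: "nat \<Rightarrow> real mat \<Rightarrow> bool" where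
  "psd d X \<longleftrightarrow> X \<in> carrier_mat d d \<and> transpose_mat X = X \<and>
     (\<forall>v \<in> carrier_vec d. v \<bullet> (X *\<^sub>v v) \<ge> 0)"

text \<open>lam is an eigenvalue vector of X: the eigenvalues listed with algebraic multiplicity.\<close>
definition eigvec_of :: "real mat \<Rightarrow> real list \<Rightarrow> bool" where
  "eigvec_of X lam \<longleftrightarrow> length lam = dim_row X \<and> char_poly X = (\<Prod>a\<leftarrow>lam. [:- a, 1:])"

definition GammaM :: "nat \<Rightarrow> real list \<Rightarrow> ereal" where
  "GammaM j lam = gammaj j lam"

end

theory Submission
  imports Defs "HOL-Combinatorics.Permutations"
begin

text \<open>Sort the (nonnegative) eigenvalues as x_1 \<ge> ... \<ge> x_d and let c be the average of
  x_(k+1), ..., x_d over j - k places. The j-subsets containing {1..k} alone contribute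
  x_1 \<cdots> x_k \<cdot> e_(j-k)(x_(k+1), ..., x_d) to e_j(x). The tail coordinates are at most c
  and sum to (j - k) c, so the identity m e_m(y) = \<Sum>_i y_i e_(m-1)(y without y_i) gives
  e_(j-k)(tail) \<ge> c^(j-k) by induction on m. As \<mu> has only j nonzero coordinates,
  e_j(\<mu>) = x_1 \<cdots> x_k c^(j-k) = exp \<Gamma>_j. The index k is the least one with
  (j - k) x_(k+1) \<le> x_(k+1) + ... + x_d; this inequality persists for all larger indices
  below j, which makes k unique.\<close>

definition esym_on :: "nat \<Rightarrow> 'a set \<Rightarrow> ('a \<Rightarrow> 'b::comm_semiring_1) \<Rightarrow> 'b" where
  "esym_on j I f = (\<Sum>S\<in>{S. S \<subseteq> I \<and> card S = j}. \<Prod>i\<in>S. f i)"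

lemma finite_subsets_card: "finite I \<Longrightarrow> finite {S. S \<subseteq> I \<and> card S = j}"
  by (rule finite_subset[of _ "Pow I"]) auto

lemma esym_on_cong: "(\<And>i. i \<in> I \<Longrightarrow> f i = g i) \<Longrightarrow> esym_on j I f = esym_on j I g"
  unfolding esym_on_def by (intro sum.cong prod.cong) auto

lemma esym_on_reindex:
  assumes "bij_betw p I J"
  shows "esym_on j I (f \<circ> p) = esym_on j J f"
proof -
  have inj: "inj_on p I" using assms by (rule bij_betw_imp_inj_on)
  have card_image_p: "card (p ` S) = card S" if "S \<subseteq> I" for S
    using inj that by (meson card_image inj_on_subset)
  have "image p ` {S. S \<subseteq> I \<and> card S = j} = {T. T \<subseteq> J \<and> card T = j}"
  proof (intro equalityI subsetI)
    fix T assume "T \<in> image p ` {S. S \<subseteq> I \<and> card S = j}"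
    then show "T \<in> {T. T \<subseteq> J \<and> card T = j}"
      using bij_betw_imp_surj_on[OF assms] card_image_p by blast
  next
    fix T assume T: "T \<in> {T. T \<subseteq> J \<and> card T = j}"
    then obtain S where "S \<subseteq> I" "T = p ` S"
      using bij_betw_imp_surj_on[OF assms] subset_imageE[of T p I] by auto
    then show "T \<in> image p ` {S. S \<subseteq> I \<and> card S = j}"
      using T card_image_p by auto
  qed
  then have "bij_betw (image p) {S. S \<subseteq> I \<and> card S = j} {T. T \<subseteq> J \<and> card T = j}"
    by (intro bij_betw_subset[OF bij_betw_Pow[OF assms]]) auto
  then have "esym_on j J f = (\<Sum>S\<in>{S. S \<subseteq> I \<and> card S = j}. \<Prod>i\<in>p ` S. f i)"
    unfolding esym_on_def by (rule sum.reindex_bij_betw[symmetric])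
  also have "\<dots> = esym_on j I (f \<circ> p)"
    unfolding esym_on_def by (intro sum.cong refl prod.reindex) (auto intro: inj_on_subset[OF inj])
  finally show ?thesis ..
qed

lemma mult_esym_on_remove:
  assumes "finite I" "i \<in> I"
  shows "f i * esym_on m (I - {i}) f = (\<Sum>S\<in>{S. S \<subseteq> I \<and> card S = Suc m \<and> i \<in> S}. \<Prod>k\<in>S. f k)"
proof -
  let ?T = "{T. T \<subseteq> I - {i} \<and> card T = m}"
  have "bij_betw (insert i) ?T {S. S \<subseteq> I \<and> card S = Suc m \<and> i \<in> S}"
  proof (rule bij_betw_byWitness[where f' = "\<lambda>S. S - {i}"])
    show "insert i ` ?T \<subseteq> {S. S \<subseteq> I \<and> card S = Suc m \<and> i \<in> S}"
      using assms by (auto intro!: card_insert_disjoint intro: finite_subset[of _ I])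
    show "(\<lambda>S. S - {i}) ` {S. S \<subseteq> I \<and> card S = Suc m \<and> i \<in> S} \<subseteq> ?T"
      using assms by (auto dest: finite_subset)
  qed auto
  then have "(\<Sum>S\<in>{S. S \<subseteq> I \<and> card S = Suc m \<and> i \<in> S}. \<Prod>k\<in>S. f k) = (\<Sum>T\<in>?T. \<Prod>k\<in>insert i T. f k)"
    by (rule sum.reindex_bij_betw[symmetric])
  also have "\<dots> = (\<Sum>T\<in>?T. f i * (\<Prod>k\<in>T. f k))"
    using assms(1) by (intro sum.cong refl prod.insert) (auto dest: finite_subset)
  finally show ?thesis by (simp add: esym_on_def sum_distrib_left)
qed

lemma of_nat_mult_esym_on_Suc:
  assumes "finite I"
  shows "of_nat (Suc m) * esym_on (Suc m) I f = (\<Sum>i\<in>I. f i * esym_on m (I - {i}) f)"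
proof -
  let ?A = "{S. S \<subseteq> I \<and> card S = Suc m}"
  have "(\<Sum>i\<in>I. f i * esym_on m (I - {i}) f) = (\<Sum>i\<in>I. \<Sum>S\<in>{S\<in>?A. i \<in> S}. \<Prod>k\<in>S. f k)"
    using assms by (intro sum.cong refl) (simp add: mult_esym_on_remove conj_assoc)
  also have "\<dots> = (\<Sum>S\<in>?A. \<Sum>i\<in>{i\<in>I. i \<in> S}. \<Prod>k\<in>S. f k)"
    by (rule sum.swap_restrict[OF assms finite_subsets_card[OF assms]])
  also have "\<dots> = (\<Sum>S\<in>?A. of_nat (Suc m) * (\<Prod>k\<in>S. f k))"
  proof (intro sum.cong refl)
    fix S assume "S \<in> ?A"
    then have "{i\<in>I. i \<in> S} = S" "card S = Suc m" by auto
    then show "(\<Sum>i\<in>{i\<in>I. i \<in> S}. \<Prod>k\<in>S. f k) = of_nat (Suc m) * (\<Prod>k\<in>S. f k)"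
      by (simp only: sum_constant)
  qed
  finally show ?thesis by (simp add: esym_on_def sum_distrib_left)
qed

lemma esym_on_0:
  assumes "finite I"
  shows "esym_on 0 I f = 1"
proof -
  have "{S. S \<subseteq> I \<and> card S = 0} = {{}}" using assms by (auto dest: finite_subset)
  then show ?thesis by (simp add: esym_on_def)
qed

lemma power_le_esym_on:
  fixes f :: "'a \<Rightarrow> 'b::linordered_idom"
  assumes "finite I" "\<And>i. i \<in> I \<Longrightarrow> 0 \<le> f i \<and> f i \<le> c" "0 \<le> c" "of_nat m * c \<le> (\<Sum>i\<in>I. f i)"
  shows "c ^ m \<le> esym_on m I f"
  using assms
proof (induction m arbitrary: I)
  case 0
  then show ?case by (simp add: esym_on_0)
next
  case (Suc m)
  have IH: "c ^ m \<le> esym_on m (I - {i}) f" if "i \<in> I" for i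
  proof (rule Suc.IH)
    have "(\<Sum>k\<in>I. f k) = f i + (\<Sum>k\<in>I - {i}. f k)"
      using Suc.prems(1) that by (simp add: sum.remove)
    then show "of_nat m * c \<le> (\<Sum>k\<in>I - {i}. f k)"
      using Suc.prems(4) Suc.prems(2)[OF that] by (simp add: algebra_simps)
  qed (use Suc.prems in auto)
  have "of_nat (Suc m) * c ^ Suc m = (of_nat (Suc m) * c) * c ^ m" by simp
  also have "\<dots> \<le> (\<Sum>i\<in>I. f i) * c ^ m"
    using Suc.prems(3,4) by (intro mult_right_mono) auto
  also have "\<dots> \<le> (\<Sum>i\<in>I. f i * esym_on m (I - {i}) f)"
    unfolding sum_distrib_right by (intro sum_mono mult_left_mono IH) (use Suc.prems in auto)
  also have "\<dots> = of_nat (Suc m) * esym_on (Suc m) I f"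
    by (rule of_nat_mult_esym_on_Suc[OF Suc.prems(1), symmetric])
  finally show ?case by (rule mult_left_le_imp_le) (rule of_nat_0_less_iff[THEN iffD2], simp)
qed

lemma prod_mult_esym_on_le:
  fixes f :: "'a \<Rightarrow> 'b::linordered_semidom"
  assumes "finite I" "A \<subseteq> I" "card A \<le> j" "\<And>i. i \<in> I \<Longrightarrow> 0 \<le> f i"
  shows "(\<Prod>i\<in>A. f i) * esym_on (j - card A) (I - A) f \<le> esym_on j I f"
proof -
  let ?B = "{T. T \<subseteq> I - A \<and> card T = j - card A}"
  have finA: "finite A" using assms(2,1) by (rule finite_subset)
  have card_Un: "card (A \<union> T) = card A + card T" if "T \<subseteq> I - A" for T
    using that assms(1) finA by (subst card_Un_disjoint) (auto dest: finite_subset)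
  have inj: "inj_on (\<lambda>T. A \<union> T) ?B" by (rule inj_onI) auto
  have sub: "(\<lambda>T. A \<union> T) ` ?B \<subseteq> {S. S \<subseteq> I \<and> card S = j}"
    using assms(2,3) card_Un by auto
  have "(\<Prod>i\<in>A. f i) * esym_on (j - card A) (I - A) f = (\<Sum>T\<in>?B. \<Prod>i\<in>A \<union> T. f i)"
    unfolding esym_on_def sum_distrib_left
    using assms(1) finA by (intro sum.cong refl prod.union_disjoint[symmetric]) (auto dest: finite_subset)
  also have "\<dots> = (\<Sum>S\<in>(\<lambda>T. A \<union> T) ` ?B. \<Prod>i\<in>S. f i)"
    by (simp add: sum.reindex[OF inj])
  also have "\<dots> \<le> esym_on j I f"
    unfolding esym_on_def using assms(1,4)
    by (intro sum_mono2[OF finite_subsets_card sub]) (auto intro!: prod_nonneg)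
  finally show ?thesis .
qed

lemma esym_on_lessThan_eq_prod:
  assumes "j \<le> n" "\<And>i. j \<le> i \<Longrightarrow> i < n \<Longrightarrow> f i = 0"
  shows "esym_on j {..<n} f = (\<Prod>i<j. f i)"
proof -
  have "esym_on j {..<n} f = (\<Sum>S\<in>{{..<j}}. \<Prod>i\<in>S. f i)"
    unfolding esym_on_def
  proof (rule sum.mono_neutral_right)
    show "{{..<j}} \<subseteq> {S. S \<subseteq> {..<n} \<and> card S = j}" using assms(1) by auto
    show "\<forall>S\<in>{S. S \<subseteq> {..<n} \<and> card S = j} - {{..<j}}. (\<Prod>i\<in>S. f i) = 0"
    proof
      fix S assume S: "S \<in> {S. S \<subseteq> {..<n} \<and> card S = j} - {{..<j}}"
      then have "\<not> S \<subseteq> {..<j}"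
        using card_subset_eq[of "{..<j}" S] by auto
      then obtain i where "i \<in> S" "j \<le> i" by (auto simp: subset_eq not_less)
      then show "(\<Prod>i\<in>S. f i) = 0"
        using S assms(2) by (intro prod_zero) (auto intro: finite_subset)
    qed
  qed (simp add: finite_subsets_card)
  then show ?thesis by simp
qed

lemma esym_eq_esym_on: "esym j xs = esym_on j {..<length xs} (nth xs)"
  unfolding esym_def esym_on_def by (simp add: atLeast0LessThan)

lemma length_dsort [simp]: "length (dsort xs) = length xs"
  by (simp add: dsort_def)

lemma set_dsort [simp]: "set (dsort xs) = set xs"
  by (simp add: dsort_def)

lemma esym_dsort [simp]: "esym j (dsort xs) = esym j xs"
proof -
  obtain p where p: "p permutes {..<length xs}" "permute_list p xs = dsort xs"
    by (rule mset_eq_permutation[of "dsort xs" xs]) (simp add: dsort_def)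
  have "esym_on j {..<length xs} (nth (dsort xs)) = esym_on j {..<length xs} (nth xs \<circ> p)"
    using p permute_list_nth[OF p(1)] by (intro esym_on_cong) auto
  also have "\<dots> = esym_on j {..<length xs} (nth xs)"
    by (rule esym_on_reindex[OF permutes_imp_bij[OF p(1)]])
  finally show ?thesis by (simp add: esym_eq_esym_on)
qed

lemma psd_eigenvalue_nonneg:
  assumes "psd d X" "eigvec_of X lam" "a \<in> set lam"
  shows "0 \<le> a"
proof -
  have X: "X \<in> carrier_mat d d" using assms(1) by (simp add: psd_def)
  have "poly (char_poly X) a = (\<Prod>b\<leftarrow>lam. poly [:- b, 1:] a)"
    using assms(2) by (simp add: eigvec_of_def poly_prod_list o_def)
  also have "\<dots> = 0" using assms(3) by (simp add: prod_list_zero_iff)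
  finally have "eigenvalue X a" using eigenvalue_root_char_poly[OF X] by simp
  then obtain v where v: "v \<in> carrier_vec d" "v \<noteq> 0\<^sub>v d" "X *\<^sub>v v = a \<cdot>\<^sub>v v"
    using X by (auto simp: eigenvalue_def eigenvector_def)
  have "0 \<le> v \<bullet> (X *\<^sub>v v)" using assms(1) v(1) by (simp add: psd_def)
  also have "v \<bullet> (X *\<^sub>v v) = a * (v \<bullet> v)" using v by simp
  finally have "0 \<le> a * (v \<bullet> v)" .
  moreover have "0 < v \<bullet> v"
  proof -
    obtain i where "i < d" "v $ i \<noteq> 0"
      using v(1,2) by (metis carrier_vecD eq_vecI index_zero_vec)
    then have "0 < (\<Sum>i<d. (v $ i)\<^sup>2)" by (intro sum_pos2) auto
    then show ?thesis using v(1) by (simp add: scalar_prod_def power2_eq_square atLeast0LessThan)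
  qed
  ultimately show ?thesis by (simp add: zero_le_mult_iff)
qed

lemma dsort_nth_antimono: "i \<le> i' \<Longrightarrow> i' < length xs \<Longrightarrow> dsort xs ! i' \<le> dsort xs ! i"
  unfolding dsort_def by (simp add: rev_nth) (rule sorted_nth_mono, auto)

lemma ordc_antimono: "1 \<le> i \<Longrightarrow> i \<le> i' \<Longrightarrow> i' \<le> length xs \<Longrightarrow> ordc xs i' \<le> ordc xs i"
  unfolding ordc_def by (rule dsort_nth_antimono) auto

lemma dsort_nth_nonneg: "\<forall>x\<in>set xs. 0 \<le> x \<Longrightarrow> i < length xs \<Longrightarrow> 0 \<le> dsort xs ! i"
  by (metis length_dsort nth_mem set_dsort)

lemma ordc_nonneg: "\<forall>x\<in>set xs. 0 \<le> x \<Longrightarrow> 1 \<le> i \<Longrightarrow> i \<le> length xs \<Longrightarrow> 0 \<le> ordc xs i"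
  unfolding ordc_def by (rule dsort_nth_nonneg) auto

lemma sum_dsort_eq_sum_ordc: "(\<Sum>i\<in>{m..<n}. dsort xs ! i) = (\<Sum>i=m+1..n. ordc xs i)"
  by (simp only: ordc_def Suc_eq_plus1[symmetric] atLeastLessThanSuc_atLeastAtMost[symmetric]
      sum.shift_bounds_Suc_ivl diff_Suc_1)

lemma prod_dsort_eq_prod_ordc: "(\<Prod>i\<in>{m..<n}. dsort xs ! i) = (\<Prod>i=m+1..n. ordc xs i)"
  by (simp only: ordc_def Suc_eq_plus1[symmetric] atLeastLessThanSuc_atLeastAtMost[symmetric]
      prod.shift_bounds_Suc_ivl diff_Suc_1)

definition tailsum :: "real list \<Rightarrow> nat \<Rightarrow> real" where
  "tailsum xs k = (\<Sum>i=k+1..length xs. ordc xs i)"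

lemma tailsum_Suc: "k < length xs \<Longrightarrow> tailsum xs k = ordc xs (k+1) + tailsum xs (k+1)"
  unfolding tailsum_def by (simp add: sum.atLeast_Suc_atMost)

lemma tailsum_nonneg: "\<forall>x\<in>set xs. 0 \<le> x \<Longrightarrow> 0 \<le> tailsum xs k"
  unfolding tailsum_def by (intro sum_nonneg ordc_nonneg) auto

lemma tailavg_eq_tailsum: "tailavg j k xs = tailsum xs k / real (j - k)"
  by (simp add: tailavg_def tailsum_def)

lemma sum_ordc_eq_add_tailsum:
  "k \<le> length xs \<Longrightarrow> (\<Sum>i=1..length xs. ordc xs i) = (\<Sum>i=1..k. ordc xs i) + tailsum xs k"
  unfolding tailsum_def by (metis le_add_diff_inverse sum.ub_add_nat le_add1 add.commute)

lemma kcond_iff_tailsum: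
  assumes "k < j"
  shows "kcond j xs k \<longleftrightarrow> (k = 0 \<or> tailsum xs k < real (j - k) * ordc xs k)
    \<and> real (j - k) * ordc xs (k+1) \<le> tailsum xs k"
  using assms unfolding kcond_def tailavg_eq_tailsum
  by (simp add: pos_divide_less_eq pos_le_divide_eq mult.commute)

text \<open>Removing x_(m+1) from the tail lowers both sides of (j - m) x_(m+1) \<le> tailsum xs m by
  x_(m+1), and the sortedness then passes the inequality on to x_(m+2).\<close>
lemma tailsum_dominance_propagates:
  assumes "\<forall>x\<in>set xs. 0 \<le> x" "j \<le> length xs"
    and "real (j - k) * ordc xs (k+1) \<le> tailsum xs k" "k < m" "m < j"
  shows "real (j - m) * ordc xs m \<le> tailsum xs m \<and> real (j - m) * ordc xs (m+1) \<le> tailsum xs m"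
  using assms(4,5)
proof (induction m rule: less_induct)
  case (less m)
  obtain p where p: "m = Suc p" using less.prems by (cases m) auto
  have "real (j - p) * ordc xs (p+1) \<le> tailsum xs p"
    using less.IH[of p] less.prems assms(3) p by (cases "k < p") (auto simp: less_Suc_eq)
  moreover have "tailsum xs p = ordc xs (p+1) + tailsum xs m"
    using tailsum_Suc[of p xs] p less.prems assms(2) by simp
  moreover have "real (j - p) = real (j - m) + 1" using p less.prems by auto
  ultimately have "real (j - m) * ordc xs m \<le> tailsum xs m"
    using p by (simp add: algebra_simps)
  moreover have "real (j - m) * ordc xs (m+1) \<le> real (j - m) * ordc xs m"
    using less.prems assms(2) p by (intro mult_left_mono ordc_antimono) auto
  ultimately show ?case by simp
qed

lemma kcond_unique:
  assumes "\<forall>x\<in>set xs. 0 \<le> x" "j \<le> length xs"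
    and "k < j" "kcond j xs k" "k' < j" "kcond j xs k'"
  shows "k = k'"
proof -
  have False if "a < b" "b < j" "kcond j xs a" "kcond j xs b" for a b
  proof -
    have "real (j - a) * ordc xs (a+1) \<le> tailsum xs a"
      using that kcond_iff_tailsum[of a j xs] by auto
    then have "real (j - b) * ordc xs b \<le> tailsum xs b"
      using tailsum_dominance_propagates[OF assms(1,2) _ that(1,2)] by blast
    moreover have "tailsum xs b < real (j - b) * ordc xs b"
      using that kcond_iff_tailsum[of b j xs] by auto
    ultimately show False by simp
  qed
  then show ?thesis using assms(3-6) by (metis linorder_neqE_nat)
qed

lemma kcond_exists:
  assumes "\<forall>x\<in>set xs. 0 \<le> x" "j \<le> length xs" "1 \<le> j"
  shows "\<exists>k<j. kcond j xs k"
proof -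
  let ?dominated = "\<lambda>k. k < j \<and> real (j - k) * ordc xs (k+1) \<le> tailsum xs k"
  have "?dominated (j - 1)"
    using tailsum_Suc[of "j - 1" xs] tailsum_nonneg[OF assms(1), of j] assms(2,3) by simp
  then obtain k where k: "?dominated k" "\<And>k'. k' < k \<Longrightarrow> \<not> ?dominated k'"
    using exists_least_iff[of ?dominated] by blast
  have "k = 0 \<or> tailsum xs k < real (j - k) * ordc xs k"
  proof (cases k)
    case (Suc p)
    have "\<not> ?dominated p" using k(2) Suc by simp
    then have "tailsum xs p < real (j - p) * ordc xs (p+1)" using Suc k(1) by auto
    moreover have "tailsum xs p = ordc xs (p+1) + tailsum xs k"
      using tailsum_Suc[of p xs] Suc k(1) assms(2) by simp
    moreover have "real (j - p) = real (j - k) + 1" using Suc k(1) by auto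
    ultimately show ?thesis using Suc by (simp add: algebra_simps)
  qed simp
  then show ?thesis using k(1) kcond_iff_tailsum[of k j xs] by blast
qed

definition mu_coord :: "nat \<Rightarrow> nat \<Rightarrow> real list \<Rightarrow> nat \<Rightarrow> real" where
  "mu_coord j k xs i = (if i \<le> k then ordc xs i else if i \<le> j then tailavg j k xs else 0)"

lemma muvec_nth: "i < length xs \<Longrightarrow> muvec j k xs ! i = mu_coord j k xs (i+1)"
  by (simp del: upt_Suc add: muvec_def mu_coord_def)

lemma length_muvec [simp]: "length (muvec j k xs) = length xs"
  by (simp del: upt_Suc add: muvec_def)

context
  fixes xs :: "real list" and j k :: nat
  assumes nonneg: "\<forall>x\<in>set xs. 0 \<le> x" and j_le: "j \<le> length xs"
    and k_less: "k < j" and kcond: "kcond j xs k"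
begin

lemma tailavg_nonneg: "0 \<le> tailavg j k xs"
  unfolding tailavg_eq_tailsum using tailsum_nonneg[OF nonneg] by simp

lemma ordc_Suc_le_tailavg: "ordc xs (k+1) \<le> tailavg j k xs"
  using kcond by (simp add: kcond_def)

lemma ordc_pos_upto_k: "1 \<le> i \<Longrightarrow> i \<le> k \<Longrightarrow> 0 < ordc xs i"
  using ordc_antimono[of i k xs] kcond k_less j_le tailavg_nonneg by (auto simp: kcond_def)

lemma mu_coord_antimono:
  "1 \<le> p \<Longrightarrow> p \<le> q \<Longrightarrow> q \<le> length xs \<Longrightarrow> mu_coord j k xs q \<le> mu_coord j k xs p"
  using ordc_antimono[of p q xs] ordc_antimono[of p k xs] kcond k_less j_le tailavg_nonneg
  by (auto simp: mu_coord_def kcond_def)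

lemma dsort_muvec: "dsort (muvec j k xs) = muvec j k xs"
proof -
  have "sorted (rev (muvec j k xs))"
  proof (rule sorted_iff_nth_mono[THEN iffD2], intro allI impI)
    fix p q assume pq: "p \<le> q" "q < length (rev (muvec j k xs))"
    then have "rev (muvec j k xs) ! p = mu_coord j k xs (length xs - p)"
      "rev (muvec j k xs) ! q = mu_coord j k xs (length xs - q)"
      using muvec_nth[of "length xs - Suc p" xs j k] muvec_nth[of "length xs - Suc q" xs j k]
      by (auto simp: rev_nth Suc_diff_Suc)
    moreover have "mu_coord j k xs (length xs - p) \<le> mu_coord j k xs (length xs - q)"
      using pq by (intro mu_coord_antimono) auto
    ultimately show "rev (muvec j k xs) ! p \<le> rev (muvec j k xs) ! q" by simp
  qed
  then have "sort (muvec j k xs) = rev (muvec j k xs)" by (intro properties_for_sort) auto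
  then show ?thesis by (simp add: dsort_def)
qed

lemma ordc_muvec: "1 \<le> i \<Longrightarrow> i \<le> length xs \<Longrightarrow> ordc (muvec j k xs) i = mu_coord j k xs i"
  by (simp add: ordc_def dsort_muvec muvec_nth)

lemma sum_ordc_le_sum_mu_coord:
  "l \<le> j \<Longrightarrow> (\<Sum>i=1..l. ordc xs i) \<le> (\<Sum>i=1..l. mu_coord j k xs i)"
proof (induction l)
  case (Suc l)
  have "ordc xs (Suc l) \<le> mu_coord j k xs (Suc l)"
  proof (cases "Suc l \<le> k")
    case False
    then have "ordc xs (Suc l) \<le> ordc xs (k+1)"
      using Suc.prems j_le by (intro ordc_antimono) auto
    then show ?thesis using False Suc.prems ordc_Suc_le_tailavg by (simp add: mu_coord_def)
  qed (simp add: mu_coord_def)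
  then show ?case using Suc by (simp add: sum.cl_ivl_Suc)
qed simp

lemma sum_mu_coord_upto_j: "(\<Sum>i=1..j. mu_coord j k xs i) = (\<Sum>i=1..length xs. ordc xs i)"
proof -
  have "(\<Sum>i=1..j. mu_coord j k xs i)
      = (\<Sum>i=1..k. mu_coord j k xs i) + (\<Sum>i=k+1..j. mu_coord j k xs i)"
    using sum.ub_add_nat[of 1 k "mu_coord j k xs" "j - k"] k_less by simp
  also have "(\<Sum>i=1..k. mu_coord j k xs i) = (\<Sum>i=1..k. ordc xs i)"
    by (intro sum.cong) (auto simp: mu_coord_def)
  also have "(\<Sum>i=k+1..j. mu_coord j k xs i) = (\<Sum>i=k+1..j. tailavg j k xs)"
    by (intro sum.cong) (auto simp: mu_coord_def)
  also have "\<dots> = tailsum xs k"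
    using k_less by (simp add: tailavg_eq_tailsum)
  finally show ?thesis using sum_ordc_eq_add_tailsum[of k xs] k_less j_le by simp
qed

lemma sum_mu_coord_beyond_j:
  "j \<le> l \<Longrightarrow> (\<Sum>i=1..l. mu_coord j k xs i) = (\<Sum>i=1..length xs. ordc xs i)"
proof (induction l rule: dec_induct)
  case (step n)
  then show ?case using k_less by (simp add: sum.cl_ivl_Suc mu_coord_def)
qed (rule sum_mu_coord_upto_j)

lemma majorized_muvec: "majorized xs (muvec j k xs)"
proof -
  have sum_ordc_muvec: "(\<Sum>i=1..l. ordc (muvec j k xs) i) = (\<Sum>i=1..l. mu_coord j k xs i)"
    if "l \<le> length xs" for l
    using that by (intro sum.cong refl ordc_muvec) auto
  have "(\<Sum>i=1..l. ordc xs i) \<le> (\<Sum>i=1..l. mu_coord j k xs i)" if "l \<le> length xs" for l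
  proof (cases "l \<le> j")
    case False
    have "(\<Sum>i=1..l. ordc xs i) \<le> (\<Sum>i=1..length xs. ordc xs i)"
      using that by (intro sum_mono2) (auto intro: ordc_nonneg[OF nonneg])
    then show ?thesis using sum_mu_coord_beyond_j[of l] False by simp
  qed (rule sum_ordc_le_sum_mu_coord)
  then show ?thesis unfolding majorized_def
    using sum_ordc_muvec sum_mu_coord_beyond_j[of "length xs"] j_le by auto
qed

lemma esym_muvec: "esym j (muvec j k xs) = (\<Prod>i=1..k. ordc xs i) * tailavg j k xs ^ (j - k)"
proof -
  have "esym j (muvec j k xs) = (\<Prod>i<j. muvec j k xs ! i)"
    unfolding esym_eq_esym_on length_muvec
    by (rule esym_on_lessThan_eq_prod) (use j_le k_less in \<open>auto simp: muvec_nth mu_coord_def\<close>)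
  also have "\<dots> = (\<Prod>i\<in>{0..<j}. mu_coord j k xs (Suc i))"
    using j_le by (intro prod.cong) (auto simp: muvec_nth)
  also have "\<dots> = (\<Prod>i=1..j. mu_coord j k xs i)"
    by (simp add: prod.shift_bounds_Suc_ivl[symmetric] atLeastLessThanSuc_atLeastAtMost)
  also have "\<dots> = (\<Prod>i=1..k. mu_coord j k xs i) * (\<Prod>i=k+1..j. mu_coord j k xs i)"
    using prod.ub_add_nat[of 1 k "mu_coord j k xs" "j - k"] k_less by simp
  also have "(\<Prod>i=1..k. mu_coord j k xs i) = (\<Prod>i=1..k. ordc xs i)"
    by (intro prod.cong) (auto simp: mu_coord_def)
  also have "(\<Prod>i=k+1..j. mu_coord j k xs i) = (\<Prod>i=k+1..j. tailavg j k xs)"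
    by (intro prod.cong) (auto simp: mu_coord_def)
  finally show ?thesis by simp
qed

lemma esym_muvec_le: "esym j (muvec j k xs) \<le> esym j xs"
proof -
  let ?x = "nth (dsort xs)" and ?n = "length xs" and ?c = "tailavg j k xs"
  have x_nonneg: "0 \<le> ?x i" if "i \<in> {..<?n}" for i
    using that nonneg by (simp add: dsort_nth_nonneg)
  have "?c ^ (j - k) \<le> esym_on (j - k) {k..<?n} ?x"
  proof (rule power_le_esym_on)
    show "0 \<le> ?x i \<and> ?x i \<le> ?c" if "i \<in> {k..<?n}" for i
      using that x_nonneg dsort_nth_antimono[of k i xs] ordc_Suc_le_tailavg by (auto simp: ordc_def)
    show "of_nat (j - k) * ?c \<le> (\<Sum>i\<in>{k..<?n}. ?x i)"
      using k_less by (simp add: sum_dsort_eq_sum_ordc tailavg_eq_tailsum tailsum_def)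
  qed (simp_all add: tailavg_nonneg)
  then have "(\<Prod>i<k. ?x i) * ?c ^ (j - k) \<le> (\<Prod>i<k. ?x i) * esym_on (j - k) {k..<?n} ?x"
    using x_nonneg k_less j_le by (intro mult_left_mono prod_nonneg) auto
  also have "\<dots> \<le> esym_on j {..<?n} ?x"
    using prod_mult_esym_on_le[of "{..<?n}" "{..<k}" j ?x] x_nonneg k_less j_le
    by (simp add: lessThan_minus_lessThan)
  also have "\<dots> = esym j xs"
    by (metis esym_dsort esym_eq_esym_on length_dsort)
  finally show ?thesis
    by (simp add: esym_muvec lessThan_atLeast0 prod_dsort_eq_prod_ordc)
qed

lemma expE_gammaj:
  assumes "kidx j xs = k"
  shows "expE (gammaj j xs) = (\<Prod>i=1..k. ordc xs i) * tailavg j k xs ^ (j - k)"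
proof -
  let ?c = "tailavg j k xs"
  have "(\<Sum>i=1..k. lnE (ordc xs i)) = (\<Sum>i=1..k. ereal (ln (ordc xs i)))"
    using ordc_pos_upto_k by (intro sum.cong refl) (force simp: lnE_def)
  then have "(\<Sum>i=1..k. lnE (ordc xs i)) = ereal (\<Sum>i=1..k. ln (ordc xs i))"
    by simp
  then have gamma: "gammaj j xs = ereal (\<Sum>i=1..k. ln (ordc xs i)) + ereal (real (j - k)) * lnE ?c"
    by (simp add: gammaj_def assms)
  have exp_sum: "exp (\<Sum>i=1..k. ln (ordc xs i)) = (\<Prod>i=1..k. ordc xs i)"
    using ordc_pos_upto_k by (simp add: exp_sum)
  show ?thesis
  proof (cases "?c = 0")
    case True
    \<comment> \<open>the simplifier writes \<open>MInfty\<close> as \<open>- \<infinity>\<close>, which \<open>expE.simps\<close> does not match\<close>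
    have "expE (- \<infinity>) = 0" using expE.simps(2) by simp
    then show ?thesis using True gamma k_less by (simp add: lnE_def)
  next
    case False
    then have "0 < ?c" using tailavg_nonneg by simp
    then show ?thesis using gamma exp_sum by (simp add: lnE_def exp_add exp_of_nat_mult)
  qed
qed

end

theorem mainTheorem10:
  fixes X :: "real mat" and lam :: "real list" and d j :: nat
  assumes "psd d X"
    and "eigvec_of X lam"
    and "1 \<le> j" and "j \<le> d"
  shows "esym j lam \<ge> expE (GammaM j lam)
    \<and> (\<exists>!k. k < j \<and> kcond j lam k)
    \<and> (\<forall>k. k < j \<and> kcond j lam k \<longrightarrow>
          majorized lam (muvec j k lam)
          \<and> esym j lam \<ge> esym j (muvec j k lam)
          \<and> esym j (muvec j k lam) = expE (GammaM j lam))"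
proof -
  have nonneg: "\<forall>x\<in>set lam. 0 \<le> x" using psd_eigenvalue_nonneg[OF assms(1,2)] by blast
  have j_le: "j \<le> length lam" using assms(1,2,4) by (auto simp: psd_def eigvec_of_def)
  have ex1: "\<exists>!k. k < j \<and> kcond j lam k"
    using kcond_exists[OF nonneg j_le assms(3)] kcond_unique[OF nonneg j_le] by blast
  have mu: "majorized lam (muvec j k lam)
          \<and> esym j lam \<ge> esym j (muvec j k lam)
          \<and> esym j (muvec j k lam) = expE (GammaM j lam)" if "k < j" "kcond j lam k" for k
  proof -
    have "kidx j lam = k" unfolding kidx_def by (rule the1_equality[OF ex1]) (use that in simp)
    then show ?thesis
      using majorized_muvec esym_muvec_le esym_muvec expE_gammaj nonneg j_le that
      by (simp add: GammaM_def)
  qed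
  then show ?thesis using ex1 by fastforce
qed

end
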